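(* Let $\beta\in(1,3/2]$. Suppose $\omega,\omega'\in\Omega$ and $\upsilon,\upsilon'\in\Upsilon$ satisfy $\omega\prec\omega'$ and $\upsilon\prec\upsilon'$. Then for every $\vec z\in S_\beta$, $$(d_1(\omega,\upsilon,\vec z),d_2(\omega,\upsilon,\vec z),\ldots)\preceq(d_1(\omega',\upsilon',\vec z),d_2(\omega',\upsilon',\vec z),\ldots).$$
   Context: Let $\vec q_0=(0,0)$, $\vec q_1=(1,0)$, $\vec q_2=(0,1)$, $f_{\vec q_i}(\vec z)=(\vec z+\vec q_i)/\beta$, and $S_\beta$ the attractor of this IFS, which for $1<\beta\le3/2$ is the closed triangle with vertices $(0,0)$, $(\frac1{\beta-1},0)$, $(0,\frac1{\beta-1})$. Subsets of $S_\beta$: $E_0=[0,\frac1\beta)\times[0,\frac1\beta)$; $E_1=\{0\le y<\frac1\beta,\ \frac{1}{\beta(\beta-1)}<x+y\le\frac{1}{\beta-1}\}$; $E_2=\{0\le x<\frac1\beta,\ \frac{1}{\beta(\beta-1)}<x+y\le\frac{1}{\beta-1}\}$; $C_{01}=\{x\ge\frac1\beta,\ 0\le y<\frac1\beta,\ x+y\le\frac{1}{\beta(\beta-1)}\}$; $C_{12}=\{x\ge\frac1\beta,\ y\ge\frac1\beta,\ \frac{1}{\beta(\beta-1)}<x+y\le\frac{1}{\beta-1}\}$; $C_{02}=\{0\le x<\frac1\beta,\ y\ge\frac1\beta,\ x+y\le\frac{1}{\beta(\beta-1)}\}$; $C_{012}=\{x\ge\frac1\beta,\ y\ge\frac1\beta,\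 x+y\le\frac{1}{\beta(\beta-1)}\}$. Let $\Omega=\{0,1\}^{\mathbb N}$, $\Upsilon=\{0,1,2\}^{\mathbb N}$, with left shifts $\sigma$, $\sigma'$. Define $K_\beta:\Omega\times\Upsilon\times S_\beta\to\Omega\times\Upsilon\times S_\beta$ by: $K_\beta(\omega,\upsilon,\vec z)=(\omega,\upsilon,\beta\vec z-\vec q_i)$ if $\vec z\in E_i$; $=(\sigma\omega,\upsilon,\beta\vec z-\vec q_i)$ if $\omega_1=0$ and $\vec z\in C_{ij}$, $ij\in\{01,12,02\}$; $=(\sigma\omega,\upsilon,\beta\vec z-\vec q_j)$ if $\omega_1=1$ and $\vec z\in C_{ij}$; $=(\omega,\sigma'\upsilon,\beta\vec z-\vec q_i)$ if $\vec z\in C_{012}$ and $\upsilon_1=i$. The digit $d_1(\omega,\upsilon,\vec z)\in\{\vec q_0,\vec q_1,\vec q_2\}$ is the vector subtracted in this definition (so the third coordinate of $K_\beta(\omega,\upsilon,\vec z)$ is $\beta\vec z-d_1$), and $d_n=d_1\circ K_\beta^{n-1}$. The relation $\prec$ ($\preceq$) denotes the (strict / non-strict) lexicographic order on $\Omega$, on $\Upsilon$, and on $\{\vec q_0,\vec q_1,\vec q_2\}^{\mathbb N}$, where in the last case symbols are ordered $\vec q_0<\vec q_1<\vec q_2$. *)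

theory Defs
  imports Main "HOL.Real"
begin

(* Points of the plane are pairs of reals; sequences in Omega / Upsilon are
   functions nat => nat, with index 0 playing the role of the paper's index 1. *)

type_synonym pt = "real \<times> real"
type_synonym state = "(nat \<Rightarrow> nat) \<times> (nat \<Rightarrow> nat) \<times> pt"

definition qvec :: "nat \<Rightarrow> pt" where
  "qvec i = (if i = 0 then (0, 0) else if i = 1 then (1, 0) else (0, 1))"

(* S_beta: for 1 < beta <= 3/2, the attractor is this closed triangle *)
definition S_beta :: "real \<Rightarrow> pt set" where
  "S_beta b = {(x, y). 0 \<le> x \<and> 0 \<le> y \<and> x + y \<le> 1 / (b - 1)}"

definition E0 :: "real \<Rightarrow> pt set" where
  "E0 b = S_beta b \<inter> {(x, y). 0 \<le> x \<and> x < 1/b \<and> 0 \<le> y \<and> y < 1/b}"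
definition E1 :: "real \<Rightarrow> pt set" where
  "E1 b = S_beta b \<inter> {(x, y). 0 \<le> y \<and> y < 1/b \<and> 1/(b*(b-1)) < x + y \<and> x + y \<le> 1/(b-1)}"
definition E2 :: "real \<Rightarrow> pt set" where
  "E2 b = S_beta b \<inter> {(x, y). 0 \<le> x \<and> x < 1/b \<and> 1/(b*(b-1)) < x + y \<and> x + y \<le> 1/(b-1)}"
definition C01 :: "real \<Rightarrow> pt set" where
  "C01 b = S_beta b \<inter> {(x, y). x \<ge> 1/b \<and> 0 \<le> y \<and> y < 1/b \<and> x + y \<le> 1/(b*(b-1))}"
definition C12 :: "real \<Rightarrow> pt set" where
  "C12 b = S_beta b \<inter> {(x, y). x \<ge> 1/b \<and> y \<ge> 1/b \<and> 1/(b*(b-1)) < x + y \<and> x + y \<le> 1/(b-1)}"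
definition C02 :: "real \<Rightarrow> pt set" where
  "C02 b = S_beta b \<inter> {(x, y). 0 \<le> x \<and> x < 1/b \<and> y \<ge> 1/b \<and> x + y \<le> 1/(b*(b-1))}"
definition C012 :: "real \<Rightarrow> pt set" where
  "C012 b = S_beta b \<inter> {(x, y). x \<ge> 1/b \<and> y \<ge> 1/b \<and> x + y \<le> 1/(b*(b-1))}"

definition shift :: "(nat \<Rightarrow> nat) \<Rightarrow> (nat \<Rightarrow> nat)" where
  "shift w = (\<lambda>n. w (Suc n))"

definition expand :: "real \<Rightarrow> pt \<Rightarrow> nat \<Rightarrow> pt" where
  "expand b z i = (b * fst z - fst (qvec i), b * snd z - snd (qvec i))"

definition digit_idx :: "real \<Rightarrow> state \<Rightarrow> nat" where
  "digit_idx b s = (case s of (w, u, z) \<Rightarrow>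
     if z \<in> E0 b then 0
     else if z \<in> E1 b then 1
     else if z \<in> E2 b then 2
     else if z \<in> C01 b then (if w 0 = 0 then 0 else 1)
     else if z \<in> C12 b then (if w 0 = 0 then 1 else 2)
     else if z \<in> C02 b then (if w 0 = 0 then 0 else 2)
     else if z \<in> C012 b then u 0
     else 0)"

(* the map K_beta (outside S_beta the value is irrelevant) *)
definition K :: "real \<Rightarrow> state \<Rightarrow> state" where
  "K b s = (case s of (w, u, z) \<Rightarrow>
     if z \<in> E0 b \<or> z \<in> E1 b \<or> z \<in> E2 b then (w, u, expand b z (digit_idx b s))
     else if z \<in> C01 b \<or> z \<in> C12 b \<or> z \<in> C02 b then (shift w, u, expand b z (digit_idx b s))
     else if z \<in> C012 b then (w, shift u, expand b z (digit_idx b s))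
     else s)"

(* d_{n+1}(s) = d_1(K^n s); the paper's d_1 is "dseq b s 0" *)
definition dseq :: "real \<Rightarrow> state \<Rightarrow> nat \<Rightarrow> pt" where
  "dseq b s n = qvec (digit_idx b ((K b ^^ n) s))"

definition lex_less :: "(nat \<Rightarrow> 'a::linorder) \<Rightarrow> (nat \<Rightarrow> 'a) \<Rightarrow> bool" where
  "lex_less a c \<longleftrightarrow> (\<exists>n. (\<forall>k<n. a k = c k) \<and> a n < c n)"
definition lex_le :: "(nat \<Rightarrow> 'a::linorder) \<Rightarrow> (nat \<Rightarrow> 'a) \<Rightarrow> bool" where
  "lex_le a c \<longleftrightarrow> a = c \<or> lex_less a c"

definition digit_rank :: "pt \<Rightarrow> nat" where
  "digit_rank v = (if v = qvec 0 then 0 else if v = qvec 1 then 1 else 2)"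

definition digit_lex_le :: "(nat \<Rightarrow> pt) \<Rightarrow> (nat \<Rightarrow> pt) \<Rightarrow> bool" where
  "digit_lex_le a c \<longleftrightarrow> lex_le (digit_rank \<circ> a) (digit_rank \<circ> c)"

end

theory Submission
  imports Defs
begin

(* As long as the two digit sequences agree, the two orbits of K_beta sit at the same point and
   have consumed equally many symbols of w, w' and of u, u', with equal consumed prefixes, since
   a binary symbol read in a cylinder C_ij is recovered from the digit it produces.  At the first
   differing digit the symbols being read are w k, w' k (or u m, u' m) with equal prefixes before
   them, so w k \<le> w' k, and the digit chosen in C_ij or C_012 is monotone in the symbol read. *)

lemma lex_less_prefix_le:
  fixes a c :: "nat \<Rightarrow> 'a::linorder"
  assumes "lex_less a c" and "\<forall>j<k. a j = c j"
  shows "a k \<le> c k"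
proof -
  obtain n where n: "\<forall>j<n. a j = c j" "a n < c n"
    using assms(1) unfolding lex_less_def by blast
  consider "n < k" | "n = k" | "k < n" by linarith
  then show ?thesis
    by cases (use n assms(2) in auto)
qed

lemma lex_le_by_first_difference:
  fixes a c :: "nat \<Rightarrow> 'a::linorder"
  assumes "\<And>n. \<forall>j<n. a j = c j \<Longrightarrow> a n \<noteq> c n \<Longrightarrow> a n < c n"
  shows "lex_le a c"
proof (cases "a = c")
  case False
  then obtain n0 where "a n0 \<noteq> c n0" by blast
  define n where "n = (LEAST n. a n \<noteq> c n)"
  have "a n \<noteq> c n"
    unfolding n_def by (rule LeastI[of _ n0]) fact
  moreover have "\<forall>j<n. a j = c j"
    unfolding n_def using not_less_Least by blast
  ultimately show ?thesis
    using assms unfolding lex_le_def lex_less_def by blast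
qed (simp add: lex_le_def)

lemma funpow_shift_apply: "(shift ^^ k) w j = w (j + k)"
  by (induction k arbitrary: j) (simp_all add: shift_def)

lemma digit_idx_le_2: "U 0 \<le> 2 \<Longrightarrow> digit_idx b (W, U, Z) \<le> 2"
  by (simp add: digit_idx_def)

lemma digit_idx_mono:
  assumes "W 0 \<le> W' 0" and "W' 0 \<le> 1" and "U 0 \<le> U' 0"
  shows "digit_idx b (W, U, Z) \<le> digit_idx b (W', U', Z)"
  using assms by (auto simp: digit_idx_def)

lemma K_step_synchronous:
  assumes "W 0 \<le> 1" and "W' 0 \<le> 1"
    and same_digit: "digit_idx b (W, U, Z) = digit_idx b (W', U', Z)"
  shows "\<exists>i j Z1. K b (W, U, Z) = ((shift ^^ i) W, (shift ^^ j) U, Z1)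
    \<and> K b (W', U', Z) = ((shift ^^ i) W', (shift ^^ j) U', Z1)
    \<and> (\<forall>l<i. W l = W' l) \<and> (\<forall>l<j. U l = U' l)"
proof -
  define Z1 where "Z1 = expand b Z (digit_idx b (W, U, Z))"
  have E: "?thesis" if "Z \<in> E0 b \<or> Z \<in> E1 b \<or> Z \<in> E2 b"
    using that same_digit unfolding K_def
    by (intro exI[of _ 0] exI[of _ 0] exI[of _ Z1]) (simp add: Z1_def)
  have C: "?thesis" if "\<not> (Z \<in> E0 b \<or> Z \<in> E1 b \<or> Z \<in> E2 b)"
    "Z \<in> C01 b \<or> Z \<in> C12 b \<or> Z \<in> C02 b"
  proof -
    have "(W 0 = 0) = (W' 0 = 0)"
      using that same_digit
      by (cases "Z \<in> C01 b"; cases "Z \<in> C12 b"; simp add: digit_idx_def split: if_splits)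
    then have "W 0 = W' 0"
      using assms(1,2) by linarith
    then show ?thesis
      using that same_digit unfolding K_def
      by (intro exI[of _ 1] exI[of _ 0] exI[of _ Z1]) (simp add: Z1_def)
  qed
  have C012: "?thesis" if "\<not> (Z \<in> E0 b \<or> Z \<in> E1 b \<or> Z \<in> E2 b)"
    "\<not> (Z \<in> C01 b \<or> Z \<in> C12 b \<or> Z \<in> C02 b)" "Z \<in> C012 b"
  proof -
    have "U 0 = U' 0"
      using that same_digit unfolding digit_idx_def by simp
    then show ?thesis
      using that same_digit unfolding K_def
      by (intro exI[of _ 0] exI[of _ 1] exI[of _ Z1]) (simp add: Z1_def)
  qed
  have outside: "?thesis" if "\<not> (Z \<in> E0 b \<or> Z \<in> E1 b \<or> Z \<in> E2 b)"
    "\<not> (Z \<in> C01 b \<or> Z \<in> C12 b \<or> Z \<in> C02 b)" "Z \<notin> C012 b"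
    using that unfolding K_def by (intro exI[of _ 0] exI[of _ 0] exI[of _ Z]) simp
  show ?thesis
    using E C C012 outside by blast
qed

lemma prefix_agree_shift:
  assumes "\<forall>l<k. w l = w' l" and "\<forall>l<i. (shift ^^ k) w l = (shift ^^ k) w' l"
  shows "\<forall>l<i + k. w l = w' l"
proof (intro allI impI)
  fix l
  assume "l < i + k"
  show "w l = w' l"
  proof (cases "l < k")
    case False
    then have "l = (l - k) + k" and "l - k < i"
      using \<open>l < i + k\<close> by simp_all
    then show ?thesis
      using assms(2) by (metis funpow_shift_apply)
  qed (use assms(1) in blast)
qed

lemma K_iter_synchronous:
  assumes "\<forall>l. w l \<le> 1" and "\<forall>l. w' l \<le> 1"
    and "\<forall>j<n. digit_idx b ((K b ^^ j) (w, u, z)) = digit_idx b ((K b ^^ j) (w', u', z))"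
  shows "\<exists>k m Z. (K b ^^ n) (w, u, z) = ((shift ^^ k) w, (shift ^^ m) u, Z)
    \<and> (K b ^^ n) (w', u', z) = ((shift ^^ k) w', (shift ^^ m) u', Z)
    \<and> (\<forall>l<k. w l = w' l) \<and> (\<forall>l<m. u l = u' l)"
  using assms(3)
proof (induction n)
  case 0
  show ?case
    by (intro exI[of _ 0] exI[of _ 0] exI[of _ z]) simp
next
  case (Suc n)
  then obtain k m Z where
    orbit: "(K b ^^ n) (w, u, z) = ((shift ^^ k) w, (shift ^^ m) u, Z)"
      "(K b ^^ n) (w', u', z) = ((shift ^^ k) w', (shift ^^ m) u', Z)"
    and prefix: "\<forall>l<k. w l = w' l" "\<forall>l<m. u l = u' l"
    by auto
  have "digit_idx b ((shift ^^ k) w, (shift ^^ m) u, Z)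
      = digit_idx b ((shift ^^ k) w', (shift ^^ m) u', Z)"
    using Suc.prems orbit by (metis lessI)
  moreover have "(shift ^^ k) w 0 \<le> 1" "(shift ^^ k) w' 0 \<le> 1"
    using assms(1,2) by (simp_all add: funpow_shift_apply)
  ultimately obtain i j Z1 where
    step: "K b ((shift ^^ k) w, (shift ^^ m) u, Z)
        = ((shift ^^ i) ((shift ^^ k) w), (shift ^^ j) ((shift ^^ m) u), Z1)"
      "K b ((shift ^^ k) w', (shift ^^ m) u', Z)
        = ((shift ^^ i) ((shift ^^ k) w'), (shift ^^ j) ((shift ^^ m) u'), Z1)"
    and read: "\<forall>l<i. (shift ^^ k) w l = (shift ^^ k) w' l"
      "\<forall>l<j. (shift ^^ m) u l = (shift ^^ m) u' l"
    using K_step_synchronous by blast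
  show ?case
  proof (intro exI conjI)
    show "(K b ^^ Suc n) (w, u, z) = ((shift ^^ (i + k)) w, (shift ^^ (j + m)) u, Z1)"
      "(K b ^^ Suc n) (w', u', z) = ((shift ^^ (i + k)) w', (shift ^^ (j + m)) u', Z1)"
      using orbit step by (simp_all add: funpow_add)
    show "\<forall>l<i + k. w l = w' l" "\<forall>l<j + m. u l = u' l"
      using prefix_agree_shift prefix read by blast+
  qed
qed

lemma digit_rank_qvec: "i \<le> 2 \<Longrightarrow> digit_rank (qvec i) = i"
  by (simp add: digit_rank_def qvec_def)

lemma K_preserves_ternary:
  assumes "\<forall>l. U l \<le> 2"
  shows "\<forall>l. fst (snd (K b (W, U, Z))) l \<le> 2"
  using assms by (simp add: K_def shift_def)

lemma K_iter_digit_idx_le_2: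
  assumes "\<forall>l. u l \<le> 2"
  shows "digit_idx b ((K b ^^ n) (w, u, z)) \<le> 2"
proof -
  have "\<forall>l. fst (snd ((K b ^^ n) (w, u, z))) l \<le> 2"
  proof (induction n)
    case (Suc n)
    obtain W U Z where orbit: "(K b ^^ n) (w, u, z) = (W, U, Z)"
      by (rule prod_cases3)
    show ?case
      using K_preserves_ternary Suc.IH by (simp add: orbit)
  qed (use assms in simp)
  then show ?thesis
    by (metis digit_idx_le_2 prod.collapse)
qed

lemma digit_rank_dseq:
  assumes "\<forall>l. u l \<le> 2"
  shows "digit_rank \<circ> dseq b (w, u, z) = (\<lambda>n. digit_idx b ((K b ^^ n) (w, u, z)))"
  using assms by (simp add: fun_eq_iff dseq_def digit_rank_qvec K_iter_digit_idx_le_2)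

lemma digit_idx_first_difference_less:
  assumes "\<forall>l. w l \<le> 1" and "\<forall>l. w' l \<le> 1"
    and "lex_less w w'" and "lex_less u u'"
    and "\<forall>j<n. digit_idx b ((K b ^^ j) (w, u, z)) = digit_idx b ((K b ^^ j) (w', u', z))"
    and "digit_idx b ((K b ^^ n) (w, u, z)) \<noteq> digit_idx b ((K b ^^ n) (w', u', z))"
  shows "digit_idx b ((K b ^^ n) (w, u, z)) < digit_idx b ((K b ^^ n) (w', u', z))"
proof -
  obtain k m Z where
    orbit: "(K b ^^ n) (w, u, z) = ((shift ^^ k) w, (shift ^^ m) u, Z)"
      "(K b ^^ n) (w', u', z) = ((shift ^^ k) w', (shift ^^ m) u', Z)"
    and prefix: "\<forall>l<k. w l = w' l" "\<forall>l<m. u l = u' l"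
    using K_iter_synchronous[OF assms(1,2,5)] by blast
  have "w k \<le> w' k" "u m \<le> u' m"
    using lex_less_prefix_le assms(3,4) prefix by blast+
  then have "digit_idx b ((K b ^^ n) (w, u, z)) \<le> digit_idx b ((K b ^^ n) (w', u', z))"
    unfolding orbit using assms(2) by (intro digit_idx_mono) (simp_all add: funpow_shift_apply)
  with assms(6) show ?thesis
    by simp
qed

theorem theorem4p1:
  fixes b :: real and w w' u u' :: "nat \<Rightarrow> nat" and z :: pt
  assumes "1 < b" and "b \<le> 3/2"
    and "\<forall>n. w n \<in> {0, 1}" and "\<forall>n. w' n \<in> {0, 1}"
    and "\<forall>n. u n \<in> {0, 1, 2}" and "\<forall>n. u' n \<in> {0, 1, 2}"
    and "lex_less w w'" and "lex_less u u'"
    and "z \<in> S_beta b"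
  shows "digit_lex_le (dseq b (w, u, z)) (dseq b (w', u', z))"
proof -
  have binary: "\<forall>l. w l \<le> 1" "\<forall>l. w' l \<le> 1"
    using assms(3,4) by (metis empty_iff insert_iff le_numeral_extra(4) zero_le)+
  have ternary: "\<forall>l. u l \<le> 2" "\<forall>l. u' l \<le> 2"
    using assms(5,6) by (metis empty_iff insert_iff one_le_numeral order_refl zero_le)+
  have "lex_le (\<lambda>n. digit_idx b ((K b ^^ n) (w, u, z)))
      (\<lambda>n. digit_idx b ((K b ^^ n) (w', u', z)))"
    using digit_idx_first_difference_less[OF binary assms(7,8)]
    by (intro lex_le_by_first_difference) blast
  then show ?thesis
    unfolding digit_lex_le_def using ternary by (simp add: digit_rank_dseq)
qed

end
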